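(* Let $G$ be a graph and $\Bbbk$ a field. (i) If there are distinct vertices $x,y$ with $N_G(y)\subseteq N_G(x)$, then $G$ is not a prime graph over $\Bbbk$. (ii) If there are distinct vertices $u,v$ with $N_G[u]\subseteq N_G[v]$ and $\deg_G(v)\ge 2$, then $G$ is not a prime graph over $\Bbbk$.
   Context: $N_G(x)$ is the open neighbourhood, $N_G[x]=N_G(x)\cup\{x\}$. $\operatorname{reg}_{\Bbbk}(G)=\max\{j\ge0:\widetilde H_{j-1}(\operatorname{Ind}(G[S]);\Bbbk)\neq0\text{ for some }S\subseteq V(G)\}$, $\operatorname{Ind}$ the independence complex (empty graph gives $\{\emptyset\}$ with $\widetilde H_{-1}=\Bbbk$). A connected graph $H$ is prime over $\Bbbk$ if $\operatorname{reg}_{\Bbbk}(H-x)<\operatorname{reg}_{\Bbbk}(H)$ for every vertex $x$. *)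

theory Defs
  imports Main
begin

definition graph :: "'a set \<Rightarrow> ('a \<Rightarrow> 'a \<Rightarrow> bool) \<Rightarrow> bool" where
  "graph V E \<longleftrightarrow> finite V \<and> (\<forall>x y. E x y \<longrightarrow> E y x) \<and> (\<forall>x. \<not> E x x)
      \<and> (\<forall>x y. E x y \<longrightarrow> x \<in> V \<and> y \<in> V)"

definition open_nbhd :: "'a set \<Rightarrow> ('a \<Rightarrow> 'a \<Rightarrow> bool) \<Rightarrow> 'a \<Rightarrow> 'a set" where
  "open_nbhd V E x = {y \<in> V. E x y}"

definition closed_nbhd :: "'a set \<Rightarrow> ('a \<Rightarrow> 'a \<Rightarrow> bool) \<Rightarrow> 'a \<Rightarrow> 'a set" where
  "closed_nbhd V E x = insert x (open_nbhd V E x)"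

definition degree :: "'a set \<Rightarrow> ('a \<Rightarrow> 'a \<Rightarrow> bool) \<Rightarrow> 'a \<Rightarrow> nat" where
  "degree V E x = card (open_nbhd V E x)"

definition connected_graph :: "'a set \<Rightarrow> ('a \<Rightarrow> 'a \<Rightarrow> bool) \<Rightarrow> bool" where
  "connected_graph V E \<longleftrightarrow> V \<noteq> {} \<and>
     (\<forall>x\<in>V. \<forall>y\<in>V. (\<lambda>a b. a \<in> V \<and> b \<in> V \<and> E a b)\<^sup>*\<^sup>* x y)"

text \<open>Faces of the independence complex of the induced subgraph G[S]
  (the empty set is always a face).\<close>

definition indep :: "('a \<Rightarrow> 'a \<Rightarrow> bool) \<Rightarrow> 'a set \<Rightarrow> 'a set \<Rightarrow> bool" where
  "indep E S F \<longleftrightarrow> F \<subseteq> S \<and> (\<forall>x\<in>F. \<forall>y\<in>F. \<not> E x y)"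

text \<open>Augmented (reduced) simplicial chain complex over a field 'k, with the
  usual orientation given by the linear order of the vertices.  A chain of
  degree j-1 is a 'k-valued function on faces of cardinality j.\<close>

definition face_sign :: "'a::linorder \<Rightarrow> 'a set \<Rightarrow> 'k::field" where
  "face_sign v F = (-1) ^ card {w \<in> F. w < v}"

definition bdry :: "'a::linorder set \<Rightarrow> ('a set \<Rightarrow> 'k::field) \<Rightarrow> 'a set \<Rightarrow> 'k" where
  "bdry S c G = (\<Sum>v\<in>S - G. face_sign v (insert v G) * c (insert v G))"

definition is_chain :: "('a \<Rightarrow> 'a \<Rightarrow> bool) \<Rightarrow> 'a set \<Rightarrow> nat \<Rightarrow> ('a set \<Rightarrow> 'k::field) \<Rightarrow> bool" where
  "is_chain E S j c \<longleftrightarrow> (\<forall>F. c F \<noteq> 0 \<longrightarrow> indep E S F \<and> card F = j)"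

definition is_cycle :: "('a::linorder \<Rightarrow> 'a \<Rightarrow> bool) \<Rightarrow> 'a set \<Rightarrow> nat \<Rightarrow> ('a set \<Rightarrow> 'k::field) \<Rightarrow> bool" where
  "is_cycle E S j c \<longleftrightarrow> is_chain E S j c \<and>
     (\<forall>G. indep E S G \<and> card G + 1 = j \<longrightarrow> bdry S c G = 0)"

definition is_boundary :: "('a::linorder \<Rightarrow> 'a \<Rightarrow> bool) \<Rightarrow> 'a set \<Rightarrow> nat \<Rightarrow> ('a set \<Rightarrow> 'k::field) \<Rightarrow> bool" where
  "is_boundary E S j c \<longleftrightarrow> (\<exists>d. is_chain E S (j + 1) d \<and>
     (\<forall>F. indep E S F \<and> card F = j \<longrightarrow> c F = bdry S d F))"

text \<open>ind_hom_nonzero K E S j: the reduced homology group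
  \<open>H~_{j-1}(Ind(G[S]); K)\<close> is nonzero.\<close>

definition ind_hom_nonzero :: "'k::field itself \<Rightarrow> ('a::linorder \<Rightarrow> 'a \<Rightarrow> bool) \<Rightarrow> 'a set \<Rightarrow> nat \<Rightarrow> bool" where
  "ind_hom_nonzero K E S j \<longleftrightarrow>
     (\<exists>c :: 'a set \<Rightarrow> 'k. is_cycle E S j c \<and> \<not> is_boundary E S j c)"

definition reg :: "'k::field itself \<Rightarrow> 'a::linorder set \<Rightarrow> ('a \<Rightarrow> 'a \<Rightarrow> bool) \<Rightarrow> nat" where
  "reg K V E = Max {j. \<exists>S\<subseteq>V. ind_hom_nonzero K E S j}"

definition prime_graph :: "'k::field itself \<Rightarrow> 'a::linorder set \<Rightarrow> ('a \<Rightarrow> 'a \<Rightarrow> bool) \<Rightarrow> bool" where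
  "prime_graph K V E \<longleftrightarrow> connected_graph V E \<and>
     (\<forall>x\<in>V. reg K (V - {x}) (\<lambda>a b. E a b \<and> a \<noteq> x \<and> b \<noteq> x) < reg K V E)"

end

theory Submission
  imports Defs
begin

text \<open>Chains of \<open>Ind(G[S])\<close> containing a vertex \<open>w\<close> are cones over chains of the link
  \<open>Ind(G[S - N[w]])\<close>; hence a nonzero class in \<open>H~_{j-1}(Ind(G[S]))\<close> survives either in
  \<open>Ind(G[S - w])\<close> or, one degree lower, in the link.  In a prime graph the regularity is attained
  only by \<open>S = V\<close>, so the link of every vertex carries homology in degree \<open>reg - 2\<close>.  In (i) the
  vertex \<open>y\<close> is isolated in \<open>G - N[x]\<close>, so that complex is a cone and acyclic; in (ii) the edge
  \<open>u v\<close> suspends the link homology of \<open>v\<close> to homology of degree \<open>reg\<close> on a vertex set avoiding a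
  second neighbour of \<open>v\<close>, so deleting that neighbour does not lower the regularity.\<close>

section \<open>Signs and the boundary map\<close>

lemma face_sign_square: "(face_sign v F :: 'k::field) * face_sign v F = 1"
  unfolding face_sign_def by (simp flip: power_add add: power_mult_distrib)

lemma face_sign_nonzero: "(face_sign v F :: 'k::field) \<noteq> 0"
  by (simp add: face_sign_def)

lemma face_sign_insert:
  assumes "finite G" "v \<notin> G" "w \<notin> G" "v \<noteq> w"
  shows "(face_sign v (insert w (insert v G)) :: 'k::field)
         = (if w < v then -1 else 1) * face_sign v (insert v G)"
proof -
  let ?A = "{t \<in> insert v G. t < v}"
  have "finite ?A" "w \<notin> ?A" using assms by auto
  moreover have "{t \<in> insert w (insert v G). t < v} = (if w < v then insert w ?A else ?A)"
    by auto
  ultimately show ?thesis by (cases "w < v") (simp_all add: face_sign_def)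
qed

lemma face_sign_swap:
  assumes "finite G" "v \<notin> G" "w \<notin> G" "v \<noteq> w"
  shows "(face_sign w (insert w G) :: 'k::field) * face_sign v (insert v (insert w G))
        = - (face_sign v (insert v G) * face_sign w (insert w (insert v G)))"
proof -
  have v: "(face_sign v (insert v (insert w G)) :: 'k)
          = (if w < v then -1 else 1) * face_sign v (insert v G)"
    using face_sign_insert[OF assms] by (simp add: insert_commute)
  have w: "(face_sign w (insert w (insert v G)) :: 'k)
          = (if v < w then -1 else 1) * face_sign w (insert w G)"
    using face_sign_insert[of G w v] assms by (simp add: insert_commute)
  show ?thesis
  proof (cases "w < v")
    case True
    then have "\<not> v < w" by simp
    then show ?thesis unfolding v w using True by (simp add: mult.commute)
  next
    case False
    then have "v < w" using assms(4) by (simp add: neq_iff)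
    then show ?thesis unfolding v w using False by (simp add: mult.commute)
  qed
qed

lemma sum_sum_antisym_eq_0:
  fixes f :: "'a \<Rightarrow> 'a \<Rightarrow> 'b::ab_group_add"
  assumes "finite A" "\<And>v u. v \<in> A \<Longrightarrow> u \<in> A \<Longrightarrow> v \<noteq> u \<Longrightarrow> f u v = - f v u"
  shows "(\<Sum>v\<in>A. \<Sum>u\<in>A - {v}. f v u) = 0"
  using assms
proof (induction A rule: finite_induct)
  case empty
  then show ?case by simp
next
  case (insert a A)
  have IH: "(\<Sum>v\<in>A. \<Sum>u\<in>A - {v}. f v u) = 0"
    by (rule insert.IH) (rule insert.prems, auto)
  have "(\<Sum>v\<in>insert a A. \<Sum>u\<in>insert a A - {v}. f v u)
      = (\<Sum>u\<in>insert a A - {a}. f a u) + (\<Sum>v\<in>A. \<Sum>u\<in>insert a A - {v}. f v u)"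
    by (rule sum.insert[OF insert.hyps])
  also have "insert a A - {a} = A" using insert.hyps by auto
  also have "(\<Sum>v\<in>A. \<Sum>u\<in>insert a A - {v}. f v u) = (\<Sum>v\<in>A. f v a + (\<Sum>u\<in>A - {v}. f v u))"
  proof (rule sum.cong [OF refl])
    fix v assume "v \<in> A"
    then have "insert a A - {v} = insert a (A - {v})" using insert.hyps by auto
    then show "(\<Sum>u\<in>insert a A - {v}. f v u) = f v a + (\<Sum>u\<in>A - {v}. f v u)"
      using sum.insert[of "A - {v}" a "f v"] insert.hyps by simp
  qed
  also have "(\<Sum>u\<in>A. f a u) + (\<Sum>v\<in>A. f v a + (\<Sum>u\<in>A - {v}. f v u)) = (\<Sum>v\<in>A. f a v + f v a)"
    using IH by (simp only: sum.distrib) simp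
  also have "\<dots> = 0"
  proof (rule sum.neutral, rule ballI)
    fix v assume "v \<in> A"
    then have "f v a = - f a v" using insert.prems insert.hyps by auto
    then show "f a v + f v a = 0" by simp
  qed
  finally show ?case .
qed

lemma bdry_bdry:
  assumes "finite S" "finite G"
  shows "bdry S (bdry S D) G = (0::'k::field)"
proof -
  let ?f = "\<lambda>v u. (face_sign v (insert v G) :: 'k)
                  * (face_sign u (insert u (insert v G)) * D (insert u (insert v G)))"
  have "bdry S (bdry S D) G = (\<Sum>v\<in>S - G. \<Sum>u\<in>(S - G) - {v}. ?f v u)"
    unfolding bdry_def
  proof (rule sum.cong [OF refl])
    fix v assume "v \<in> S - G"
    have "S - insert v G = (S - G) - {v}" by auto
    then show "face_sign v (insert v G) * (\<Sum>u\<in>S - insert v G. face_sign u (insert u (insert v G))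
                 * D (insert u (insert v G))) = (\<Sum>u\<in>(S - G) - {v}. ?f v u)"
      by (simp add: sum_distrib_left)
  qed
  also have "\<dots> = 0"
  proof (rule sum_sum_antisym_eq_0)
    fix v u assume "v \<in> S - G" "u \<in> S - G" "v \<noteq> u"
    then have "(face_sign u (insert u G) :: 'k) * face_sign v (insert v (insert u G))
             = - (face_sign v (insert v G) * face_sign u (insert u (insert v G)))"
      using face_sign_swap[of G v u] assms by auto
    then show "?f u v = - ?f v u"
      by (simp add: insert_commute mult.assoc[symmetric])
  qed (use assms in auto)
  finally show ?thesis .
qed

lemma bdry_add: "bdry S (\<lambda>F. a F + b F) G = bdry S a G + bdry S b G"
  by (simp add: bdry_def distrib_left sum.distrib)

lemma bdry_diff: "bdry S (\<lambda>F. a F - b F) G = bdry S a G - bdry S b G"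
  by (simp add: bdry_def right_diff_distrib sum_subtractf)

lemma bdry_neg: "bdry S (\<lambda>F. - a F) G = - bdry S a G"
  by (simp add: bdry_def sum_negf)

lemma bdry_restrict:
  assumes "finite S" "S' \<subseteq> S" "\<And>F. c F \<noteq> 0 \<Longrightarrow> F \<subseteq> S'"
  shows "bdry S c G = bdry S' c G"
  unfolding bdry_def
  by (rule sum.mono_neutral_right) (use assms in auto)

lemma bdry_eq_single:
  assumes "finite S" "y \<in> S - G" "\<And>v. v \<in> S - G \<Longrightarrow> v \<noteq> y \<Longrightarrow> c (insert v G) = 0"
  shows "bdry S c G = face_sign y (insert y G) * c (insert y G)"
  unfolding bdry_def
  by (subst sum.remove[of _ y]) (use assms in \<open>auto intro!: sum.neutral\<close>)

section \<open>Cycles and boundaries\<close>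

lemma indep_mono: "indep E S F \<Longrightarrow> S \<subseteq> S' \<Longrightarrow> indep E S' F"
  by (auto simp: indep_def)

lemma indep_subset: "indep E S F \<Longrightarrow> F' \<subseteq> F \<Longrightarrow> indep E S F'"
  by (auto simp: indep_def)

lemma chain_mono: "is_chain E S j c \<Longrightarrow> S \<subseteq> S' \<Longrightarrow> is_chain E S' j c"
  unfolding is_chain_def by (blast intro: indep_mono)

lemma chain_add: "is_chain E S j a \<Longrightarrow> is_chain E S j b \<Longrightarrow> is_chain E S j (\<lambda>F. a F + b F)"
  unfolding is_chain_def by (metis add.right_neutral add_0)

lemma chain_diff: "is_chain E S j a \<Longrightarrow> is_chain E S j b \<Longrightarrow> is_chain E S j (\<lambda>F. a F - b F)"
  unfolding is_chain_def by (metis diff_self diff_zero)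

lemma chain_neg: "is_chain E S j a \<Longrightarrow> is_chain E S j (\<lambda>F. - a F)"
  unfolding is_chain_def by simp

lemma chain_support: "is_chain E S j c \<Longrightarrow> c F \<noteq> 0 \<Longrightarrow> F \<subseteq> S"
  unfolding is_chain_def indep_def by blast

lemma chain_bdry:
  assumes "finite S" "is_chain E S (Suc j) D"
  shows "is_chain E S j (bdry S D)"
  unfolding is_chain_def
proof (intro allI impI)
  fix F assume "bdry S D F \<noteq> 0"
  then obtain v where v: "v \<in> S - F" "D (insert v F) \<noteq> 0"
    unfolding bdry_def by (metis (no_types, lifting) mult_zero_right sum.neutral)
  then have "indep E S (insert v F)" "card (insert v F) = Suc j"
    using assms(2) unfolding is_chain_def by auto
  moreover have "finite F"
    using \<open>indep E S (insert v F)\<close> assms(1) by (auto simp: indep_def intro: finite_subset)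
  ultimately show "indep E S F \<and> card F = j"
    using v indep_subset by fastforce
qed

lemma cycle_bdry:
  assumes "finite S" "is_chain E S (Suc j) D"
  shows "is_cycle E S j (bdry S D)"
  unfolding is_cycle_def
proof (intro conjI allI impI)
  show "is_chain E S j (bdry S D)" by (rule chain_bdry[OF assms])
  fix G assume "indep E S G \<and> card G + 1 = j"
  then have "finite G" using assms(1) by (auto simp: indep_def intro: finite_subset)
  then show "bdry S (bdry S D) G = 0" by (rule bdry_bdry[OF assms(1)])
qed

lemma cycle_add: "is_cycle E S j a \<Longrightarrow> is_cycle E S j b \<Longrightarrow> is_cycle E S j (\<lambda>F. a F + b F)"
  unfolding is_cycle_def by (simp add: chain_add bdry_add)

lemma boundary_add_bdry:
  assumes "is_chain E S (Suc j) D" "is_boundary E S j (\<lambda>F. c F + bdry S D F)"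
  shows "is_boundary E S j c"
proof -
  obtain d where "is_chain E S (j + 1) d"
    and d: "\<forall>F. indep E S F \<and> card F = j \<longrightarrow> c F + bdry S D F = bdry S d F"
    using assms(2) by (auto simp: is_boundary_def)
  then have "is_chain E S (j + 1) (\<lambda>F. d F - D F)"
    using chain_diff assms(1) by auto
  with d show ?thesis
    unfolding is_boundary_def by (intro exI[of _ "\<lambda>F. d F - D F"]) (auto simp: bdry_diff algebra_simps)
qed

lemma cycle_mono:
  assumes "finite S" "S' \<subseteq> S" "is_cycle E S' j c"
  shows "is_cycle E S j c"
  unfolding is_cycle_def
proof (intro conjI allI impI)
  have ch: "is_chain E S' j c" using assms(3) by (simp add: is_cycle_def)
  then show "is_chain E S j c" using assms(2) by (rule chain_mono)
  fix G assume G: "indep E S G \<and> card G + 1 = j"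
  have "bdry S c G = bdry S' c G"
    by (rule bdry_restrict[OF assms(1,2)]) (rule chain_support[OF ch])
  also have "\<dots> = 0"
  proof (cases "G \<subseteq> S'")
    case True
    then have "indep E S' G" using G by (simp add: indep_def)
    then show ?thesis using G assms(3) by (simp add: is_cycle_def)
  next
    case False
    have "is_chain E S' (Suc (card G)) c" using ch G by simp
    then have "is_chain E S' (card G) (bdry S' c)"
      by (rule chain_bdry[OF finite_subset[OF assms(2,1)]])
    then show ?thesis using False chain_support by blast
  qed
  finally show "bdry S c G = 0" .
qed

lemma cycle_restrict:
  assumes "finite S" "S' \<subseteq> S" "is_cycle E S j c" "\<And>F. c F \<noteq> 0 \<Longrightarrow> F \<subseteq> S'"
  shows "is_cycle E S' j c"
  unfolding is_cycle_def
proof (intro conjI allI impI)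
  have "is_chain E S j c" using assms(3) by (simp add: is_cycle_def)
  then show "is_chain E S' j c"
    using assms(4) unfolding is_chain_def indep_def by auto
  fix G assume G: "indep E S' G \<and> card G + 1 = j"
  then have "indep E S G" using assms(2) indep_mono by blast
  then have "bdry S c G = 0" using G assms(3) by (simp add: is_cycle_def)
  then show "bdry S' c G = 0" using bdry_restrict[of S S' c G, OF assms(1,2,4)] by simp
qed

lemma boundary_mono:
  assumes "finite S" "S' \<subseteq> S" "is_chain E S' j c" "is_boundary E S' j c"
  shows "is_boundary E S j c"
proof -
  obtain d where chd: "is_chain E S' (j + 1) d"
    and d: "\<forall>F. indep E S' F \<and> card F = j \<longrightarrow> c F = bdry S' d F"
    using assms(4) by (auto simp: is_boundary_def)
  have fS': "finite S'" using assms(1,2) finite_subset by blast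
  have "c F = bdry S d F" if "indep E S F" "card F = j" for F
  proof -
    have "bdry S d F = bdry S' d F"
      using bdry_restrict[OF assms(1,2)] chain_support[OF chd] by blast
    moreover have "c F = bdry S' d F"
    proof (cases "F \<subseteq> S'")
      case True
      then show ?thesis using d that by (auto simp: indep_def)
    next
      case False
      then show ?thesis
        using chain_support[OF assms(3)] chain_support[OF chain_bdry[OF fS']] chd by force
    qed
    ultimately show ?thesis by simp
  qed
  then show ?thesis
    using chain_mono[OF chd assms(2)] by (auto simp: is_boundary_def)
qed

lemma cycle_eq_0_if_vanishes_off:
  assumes "finite S" "y \<in> S" "is_cycle E S j z" "\<And>F. y \<notin> F \<Longrightarrow> z F = 0"
  shows "z F = 0"
proof (rule ccontr)
  assume nz: "z F \<noteq> 0"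
  then have yF: "y \<in> F" using assms(4) by blast
  have "is_chain E S j z" using assms(3) by (simp add: is_cycle_def)
  then have F: "indep E S F" "card F = j" using nz by (auto simp: is_chain_def)
  then have "finite F" using assms(1) by (auto simp: indep_def intro: finite_subset)
  then have "card (F - {y}) + 1 = j" using F(2) yF by (metis Suc_eq_plus1 card_Suc_Diff1)
  moreover have "indep E S (F - {y})" using F(1) by (rule indep_subset) blast
  ultimately have "bdry S z (F - {y}) = 0" using assms(3) by (simp add: is_cycle_def)
  moreover have "bdry S z (F - {y}) = face_sign y F * z F"
  proof -
    have "bdry S z (F - {y}) = face_sign y (insert y (F - {y})) * z (insert y (F - {y}))"
      by (rule bdry_eq_single[OF assms(1)]) (use assms(2,4) in auto)
    then show ?thesis using yF by (simp add: insert_absorb)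
  qed
  ultimately show False using nz face_sign_nonzero by auto
qed

section \<open>Link and cone of a vertex\<close>

text \<open>\<open>non_nbhd E S w\<close> is \<open>S - N[w]\<close>, and \<open>Ind(G[non_nbhd E S w])\<close> is the link of \<open>w\<close> in
  \<open>Ind(G[S])\<close>.\<close>

abbreviation non_nbhd :: "('a \<Rightarrow> 'a \<Rightarrow> bool) \<Rightarrow> 'a set \<Rightarrow> 'a \<Rightarrow> 'a set" where
  "non_nbhd E S w \<equiv> {t \<in> S. t \<noteq> w \<and> \<not> E w t}"

definition link :: "'a::linorder \<Rightarrow> ('a set \<Rightarrow> 'k::field) \<Rightarrow> 'a set \<Rightarrow> 'k" where
  "link w d G = (if w \<in> G then 0 else face_sign w (insert w G) * d (insert w G))"

definition cone :: "'a::linorder \<Rightarrow> ('a set \<Rightarrow> 'k::field) \<Rightarrow> 'a set \<Rightarrow> 'k" where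
  "cone w e F = (if w \<in> F then face_sign w F * e (F - {w}) else 0)"

lemma link_cone:
  assumes "is_chain E T j e" "w \<notin> T"
  shows "link w (cone w e) = e"
proof
  fix G
  show "link w (cone w e) G = e G"
  proof (cases "w \<in> G")
    case True
    then have "e G = 0" using chain_support[OF assms(1)] assms(2) by blast
    then show ?thesis using True by (simp add: link_def)
  next
    case False
    then show ?thesis by (simp add: link_def cone_def mult.assoc[symmetric] face_sign_square)
  qed
qed

lemma bdry_cone_outside:
  assumes "finite S" "y \<in> S" "y \<notin> G"
  shows "bdry S (cone y e) G = e G"
proof -
  have "bdry S (cone y e) G = face_sign y (insert y G) * cone y e (insert y G)"
    by (rule bdry_eq_single) (use assms in \<open>auto simp: cone_def\<close>)
  then show ?thesis using assms(3) by (simp add: cone_def mult.assoc[symmetric] face_sign_square)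
qed

lemma chain_link:
  assumes "is_chain E S (Suc j) d"
  shows "is_chain E (non_nbhd E S w) j (link w d)"
  unfolding is_chain_def
proof (intro allI impI)
  fix G assume "link w d G \<noteq> 0"
  then have w: "w \<notin> G" and "d (insert w G) \<noteq> 0" by (auto simp: link_def split: if_splits)
  then have i: "indep E S (insert w G)" and c: "card (insert w G) = Suc j"
    using assms unfolding is_chain_def by auto
  have "finite (insert w G)" using c by (metis card.infinite nat.distinct(1))
  then have "card G = j" using c w by simp
  moreover have "indep E (non_nbhd E S w) G" using i w unfolding indep_def by auto
  ultimately show "indep E (non_nbhd E S w) G \<and> card G = j" by simp
qed

text \<open>Up to sign, \<open>link w\<close> is a chain map into the link.\<close>

lemma link_bdry:
  assumes "finite S" "w \<notin> G" "G \<subseteq> S" "\<And>F. d F \<noteq> 0 \<Longrightarrow> indep E S F"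
  shows "link w (bdry S d) G = - bdry (non_nbhd E S w) (link w d) G"
proof -
  let ?T = "non_nbhd E S w"
  have fG: "finite G" using assms(1,3) finite_subset by blast
  have restrict: "bdry S d (insert w G)
      = (\<Sum>v\<in>?T - G. face_sign v (insert v (insert w G)) * d (insert v (insert w G)))"
    unfolding bdry_def
  proof (rule sum.mono_neutral_right)
    show "finite (S - insert w G)" using assms(1) by simp
    show "?T - G \<subseteq> S - insert w G" by auto
    show "\<forall>v\<in>S - insert w G - (?T - G).
            face_sign v (insert v (insert w G)) * d (insert v (insert w G)) = 0"
    proof
      fix v assume "v \<in> S - insert w G - (?T - G)"
      then have "E w v" by auto
      then have "\<not> indep E S (insert v (insert w G))" unfolding indep_def by auto
      then show "face_sign v (insert v (insert w G)) * d (insert v (insert w G)) = 0"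
        using assms(4) by auto
    qed
  qed
  have "link w (bdry S d) G
      = (\<Sum>v\<in>?T - G. - (face_sign v (insert v G)
            * (face_sign w (insert w (insert v G)) * d (insert w (insert v G)))))"
    unfolding link_def restrict sum_distrib_left using assms(2)
  proof (simp, intro sum.cong refl)
    fix v assume v: "v \<in> ?T - G"
    have "(face_sign w (insert w G) :: 'b) * face_sign v (insert v (insert w G))
        = - (face_sign v (insert v G) * face_sign w (insert w (insert v G)))"
      by (rule face_sign_swap) (use v fG assms(2) in auto)
    then show "face_sign w (insert w G) * (face_sign v (insert v (insert w G)) * d (insert v (insert w G)))
       = - (face_sign v (insert v G) * (face_sign w (insert w (insert v G)) * d (insert w (insert v G))))"
      by (simp add: insert_commute mult.assoc[symmetric])
  qed
  also have "\<dots> = - bdry ?T (link w d) G"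
    unfolding bdry_def link_def sum_negf[symmetric] by (rule sum.cong) (use assms(2) in auto)
  finally show ?thesis .
qed

lemma indep_non_nbhd_of_insert:
  "w \<notin> G \<Longrightarrow> indep E S (insert w G) \<Longrightarrow> indep E (non_nbhd E S w) G"
  unfolding indep_def by auto

locale simple_edges =
  fixes E :: "'a::linorder \<Rightarrow> 'a \<Rightarrow> bool"
  assumes edge_sym: "E a b \<Longrightarrow> E b a" and edge_irrefl: "\<not> E a a"
begin

lemma indep_insert_non_nbhd:
  assumes "w \<in> S" "indep E (non_nbhd E S w) G"
  shows "indep E S (insert w G)"
  using assms edge_sym edge_irrefl unfolding indep_def by blast

lemma chain_cone:
  assumes "finite S" "w \<in> S" "is_chain E (non_nbhd E S w) j e"
  shows "is_chain E S (Suc j) (cone w e)"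
  unfolding is_chain_def
proof (intro allI impI)
  fix F assume "cone w e F \<noteq> 0"
  then have w: "w \<in> F" and "e (F - {w}) \<noteq> 0" by (auto simp: cone_def split: if_splits)
  then have i: "indep E (non_nbhd E S w) (F - {w})" and c: "card (F - {w}) = j"
    using assms(3) unfolding is_chain_def by auto
  have "F - {w} \<subseteq> S" using i by (auto simp: indep_def)
  then have "finite F" using assms(1) by (metis finite_Diff2 finite.emptyI finite.insertI finite_subset)
  then have "card F = Suc j" using c w by (metis card_Suc_Diff1)
  moreover have "indep E S (insert w (F - {w}))" by (rule indep_insert_non_nbhd[OF assms(2) i])
  ultimately show "indep E S F \<and> card F = Suc j" using w by (simp add: insert_absorb)
qed

lemma cycle_link:
  assumes "finite S" "w \<in> S" "is_cycle E S (Suc m) c"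
  shows "is_cycle E (non_nbhd E S w) m (link w c)"
  unfolding is_cycle_def
proof (intro conjI allI impI)
  have ch: "is_chain E S (Suc m) c" using assms(3) by (simp add: is_cycle_def)
  then show "is_chain E (non_nbhd E S w) m (link w c)" by (rule chain_link)
  fix G assume G: "indep E (non_nbhd E S w) G \<and> card G + 1 = m"
  then have GS: "G \<subseteq> S" and wG: "w \<notin> G" and fG: "finite G"
    using assms(1) by (auto simp: indep_def intro: finite_subset)
  have "indep E S (insert w G)" using G indep_insert_non_nbhd[OF assms(2)] by blast
  moreover have "card (insert w G) + 1 = Suc m" using G fG wG by simp
  ultimately have "bdry S c (insert w G) = 0" using assms(3) by (simp add: is_cycle_def)
  then have "link w (bdry S c) G = 0" using wG by (simp add: link_def)
  moreover have "link w (bdry S c) G = - bdry (non_nbhd E S w) (link w c) G"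
    by (rule link_bdry[OF assms(1) wG GS]) (use ch in \<open>simp add: is_chain_def\<close>)
  ultimately show "bdry (non_nbhd E S w) (link w c) G = 0" by simp
qed

lemma boundary_link:
  assumes "finite S" "w \<in> S" "is_boundary E S (Suc m) c"
  shows "is_boundary E (non_nbhd E S w) m (link w c)"
proof -
  obtain d where chd: "is_chain E S (Suc m + 1) d"
    and d: "\<forall>F. indep E S F \<and> card F = Suc m \<longrightarrow> c F = bdry S d F"
    using assms(3) by (auto simp: is_boundary_def)
  have "link w c H = bdry (non_nbhd E S w) (\<lambda>H. - link w d H) H"
    if H: "indep E (non_nbhd E S w) H" "card H = m" for H
  proof -
    have HS: "H \<subseteq> S" and wH: "w \<notin> H" and fH: "finite H"
      using H assms(1) by (auto simp: indep_def intro: finite_subset)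
    have "indep E S (insert w H)" using H(1) indep_insert_non_nbhd[OF assms(2)] by blast
    moreover have "card (insert w H) = Suc m" using H(2) fH wH by simp
    ultimately have "link w c H = link w (bdry S d) H" using d wH by (simp add: link_def)
    also have "\<dots> = - bdry (non_nbhd E S w) (link w d) H"
      by (rule link_bdry[OF assms(1) wH HS]) (use chd in \<open>simp add: is_chain_def\<close>)
    finally show ?thesis by (simp add: bdry_neg)
  qed
  moreover have "is_chain E (non_nbhd E S w) (m + 1) (\<lambda>H. - link w d H)"
    using chain_neg[OF chain_link] chd by simp
  ultimately show ?thesis unfolding is_boundary_def by blast
qed

lemma cycle_is_boundary_if_isolated:
  assumes "finite T" "y \<in> T" "\<forall>t\<in>T. \<not> E y t" "is_cycle E T j c"
  shows "is_boundary E T j c"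
proof -
  define c0 where "c0 = (\<lambda>F. if y \<in> F then 0 else c F)"
  have "non_nbhd E T y = T - {y}" using assms(3) by auto
  moreover have "is_chain E T j c" using assms(4) by (simp add: is_cycle_def)
  ultimately have "is_chain E (non_nbhd E T y) j c0"
    unfolding is_chain_def indep_def c0_def by auto
  then have chd: "is_chain E T (Suc j) (cone y c0)" by (rule chain_cone[OF assms(1,2)])
  define z where "z = (\<lambda>F. c F + bdry T (\<lambda>F. - cone y c0 F) F)"
  have "is_cycle E T j z"
    unfolding z_def by (rule cycle_add[OF assms(4) cycle_bdry[OF assms(1) chain_neg[OF chd]]])
  moreover have "z F = 0" if "y \<notin> F" for F
    using bdry_cone_outside[OF assms(1,2) that, of c0] that by (simp add: z_def bdry_neg c0_def)
  ultimately have "z F = 0" for F by (rule cycle_eq_0_if_vanishes_off[OF assms(1,2)])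
  then have "c F = bdry T (cone y c0) F" for F
    by (simp add: z_def bdry_neg add_eq_0_iff2)
  with chd show ?thesis unfolding is_boundary_def by auto
qed

lemma hom_nonzero_delete_if_link_bounds:
  fixes c :: "'a set \<Rightarrow> 'k::field" and K :: "'k itself"
  assumes "finite S" "w \<in> S" "is_cycle E S j c" "\<not> is_boundary E S j c"
    and "is_chain E (non_nbhd E S w) j e"
    and "\<forall>G. indep E (non_nbhd E S w) G \<and> card G + 1 = j
             \<longrightarrow> link w c G = bdry (non_nbhd E S w) e G"
  shows "ind_hom_nonzero K E (S - {w}) j"
proof -
  define D where "D = cone w e"
  define c' where "c' = (\<lambda>F. c F + bdry S D F)"
  have chD: "is_chain E S (Suc j) D" unfolding D_def by (rule chain_cone[OF assms(1,2,5)])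
  have cyc': "is_cycle E S j c'"
    unfolding c'_def by (rule cycle_add[OF assms(3) cycle_bdry[OF assms(1) chD]])
  have c'_off: "c' F = 0" if "w \<in> F" for F
  proof (rule ccontr)
    assume nz: "c' F \<noteq> 0"
    then have iF: "indep E S F" and cF: "card F = j" using cyc' by (auto simp: is_cycle_def is_chain_def)
    define G where "G = F - {w}"
    have F: "F = insert w G" "w \<notin> G" using that by (auto simp: G_def)
    have iG: "indep E (non_nbhd E S w) G" using indep_non_nbhd_of_insert F iF by simp
    then have GS: "G \<subseteq> S" and fG: "finite G" using assms(1) by (auto simp: indep_def intro: finite_subset)
    have "card G + 1 = j" using cF F fG by simp
    then have "link w c G = bdry (non_nbhd E S w) e G" using assms(6) iG by blast
    moreover have "link w (bdry S D) G = - bdry (non_nbhd E S w) (link w D) G"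
      by (rule link_bdry[OF assms(1) F(2) GS]) (use chD in \<open>simp add: is_chain_def\<close>)
    moreover have "link w D = e" unfolding D_def by (rule link_cone[OF assms(5)]) simp
    ultimately have "face_sign w F * c' F = 0"
      using F by (simp add: c'_def link_def distrib_left)
    then show False using nz by (simp add: face_sign_nonzero)
  qed
  have supp: "F \<subseteq> S - {w}" if "c' F \<noteq> 0" for F
    using that c'_off chain_support[of E S j c'] cyc' by (auto simp: is_cycle_def)
  have cyc'': "is_cycle E (S - {w}) j c'" by (rule cycle_restrict[OF assms(1) _ cyc' supp]) blast
  have "\<not> is_boundary E (S - {w}) j c'"
  proof
    assume "is_boundary E (S - {w}) j c'"
    moreover have "is_chain E (S - {w}) j c'" using cyc'' by (simp add: is_cycle_def)
    ultimately have "is_boundary E S j c'" using boundary_mono[OF assms(1)] by blast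
    then show False using boundary_add_bdry[OF chD] assms(4) by (simp add: c'_def)
  qed
  with cyc'' show ?thesis unfolding ind_hom_nonzero_def by blast
qed

text \<open>The deletion--link exact sequence of \<open>Ind(G[S])\<close> at the vertex \<open>w\<close>.\<close>

lemma hom_nonzero_delete_or_link:
  fixes K :: "'k::field itself"
  assumes "finite S" "w \<in> S" "ind_hom_nonzero K E S j"
  shows "ind_hom_nonzero K E (S - {w}) j
         \<or> (0 < j \<and> ind_hom_nonzero K E (non_nbhd E S w) (j - 1))"
proof -
  obtain c :: "'a set \<Rightarrow> 'k" where cyc: "is_cycle E S j c" and nb: "\<not> is_boundary E S j c"
    using assms(3) by (auto simp: ind_hom_nonzero_def)
  note delete = hom_nonzero_delete_if_link_bounds[OF assms(1,2) cyc nb]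
  show ?thesis
  proof (cases j)
    case 0
    have "is_chain E (non_nbhd E S w) j (\<lambda>F. 0)" by (simp add: is_chain_def)
    then show ?thesis using delete[of "\<lambda>F. 0"] 0 by simp
  next
    case (Suc m)
    show ?thesis
    proof (cases "is_boundary E (non_nbhd E S w) m (link w c)")
      case True
      then show ?thesis using delete Suc by (auto simp: is_boundary_def)
    next
      case False
      then show ?thesis using cycle_link[OF assms(1,2)] cyc Suc
        by (auto simp: ind_hom_nonzero_def)
    qed
  qed
qed

text \<open>If \<open>u v\<close> is an edge with no neighbours in \<open>T\<close>, then \<open>Ind(G[T + u + v])\<close> is the suspension of
  \<open>Ind(G[T])\<close>: a cycle \<open>c\<close> on \<open>T\<close> is coned off twice, by \<open>v\<close> directly and by \<open>u\<close> (which is isolated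
  in \<open>T + u\<close>), and the difference of the two cones is a cycle whose link at \<open>v\<close> is \<open>c\<close> again.\<close>

lemma hom_nonzero_suspension:
  fixes K :: "'k::field itself"
  assumes fT: "finite T" and "u \<notin> T" "v \<notin> T" "E v u" "\<forall>t\<in>T. \<not> E u t" "\<forall>t\<in>T. \<not> E v t"
    and "ind_hom_nonzero K E T m"
  shows "ind_hom_nonzero K E (insert u (insert v T)) (Suc m)"
proof -
  obtain c0 :: "'a set \<Rightarrow> 'k" where cyc0: "is_cycle E T m c0" and nb0: "\<not> is_boundary E T m c0"
    using assms(7) by (auto simp: ind_hom_nonzero_def)
  have ch0: "is_chain E T m c0" using cyc0 by (simp add: is_cycle_def)
  define T1 where "T1 = insert u T"
  define S where "S = insert u (insert v T)"
  have fS: "finite S" and fT1: "finite T1" and T1S: "T1 \<subseteq> S" and vS: "v \<in> S"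
    using fT by (auto simp: S_def T1_def)
  have vT1: "v \<notin> T1" using assms(3,4) edge_irrefl by (auto simp: T1_def)
  have link_v: "non_nbhd E S v = T" using assms(2-6) edge_sym by (auto simp: S_def)
  have "is_boundary E T1 m c0"
    by (rule cycle_is_boundary_if_isolated[OF fT1 _ _ cycle_mono[OF fT1 _ cyc0]])
      (use assms(5) edge_irrefl in \<open>auto simp: T1_def\<close>)
  then obtain e where che: "is_chain E T1 (Suc m) e"
    and e: "\<forall>F. indep E T1 F \<and> card F = m \<longrightarrow> c0 F = bdry T1 e F"
    by (auto simp: is_boundary_def)
  define D where "D = cone v c0"
  define c where "c = (\<lambda>F. D F - e F)"
  have chD: "is_chain E S (Suc m) D"
    unfolding D_def by (rule chain_cone[OF fS vS]) (simp add: link_v ch0)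
  have chc: "is_chain E S (Suc m) c"
    unfolding c_def by (rule chain_diff[OF chD chain_mono[OF che T1S]])
  have "bdry S c G = 0" if "v \<notin> G" for G
  proof -
    have "bdry S c G = c0 G - bdry T1 e G"
      using bdry_cone_outside[OF fS vS that, of c0]
        bdry_restrict[of S T1 e G, OF fS T1S chain_support[OF che]]
      by (simp add: c_def D_def bdry_diff)
    moreover have "c0 G = bdry T1 e G"
    proof (cases "indep E T1 G \<and> card G = m")
      case True
      then show ?thesis using e by blast
    next
      case False
      then have "c0 G = 0"
        using ch0 indep_mono[of E T G T1] by (auto simp: is_chain_def T1_def)
      moreover have "bdry T1 e G = 0"
        using False chain_bdry[OF fT1 che] by (auto simp: is_chain_def)
      ultimately show ?thesis by simp
    qed
    ultimately show ?thesis by simp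
  qed
  then have "bdry S c G = 0" for G
    by (rule cycle_eq_0_if_vanishes_off[OF fS vS cycle_bdry[OF fS chc]])
  with chc have cyc: "is_cycle E S (Suc m) c" by (simp add: is_cycle_def)
  have "link v c = c0"
  proof
    fix G
    have "e (insert v G) = 0" using chain_support[OF che] vT1 by blast
    then have "link v c G = link v D G" by (simp add: c_def link_def right_diff_distrib)
    also have "link v D = c0" unfolding D_def by (rule link_cone[OF ch0 assms(3)])
    finally show "link v c G = c0 G" .
  qed
  then have "\<not> is_boundary E S (Suc m) c"
    using boundary_link[OF fS vS] nb0 link_v by metis
  with cyc show ?thesis unfolding ind_hom_nonzero_def S_def by blast
qed

end

section \<open>Regularity and prime graphs\<close>

lemma ind_hom_nonzero_le_card:
  fixes K :: "'k::field itself"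
  assumes "finite S" "ind_hom_nonzero K E S j"
  shows "j \<le> card S"
proof (rule ccontr)
  assume j: "\<not> j \<le> card S"
  obtain c :: "'a set \<Rightarrow> 'k" where cyc: "is_cycle E S j c" and nb: "\<not> is_boundary E S j c"
    using assms(2) by (auto simp: ind_hom_nonzero_def)
  have "c F = 0" for F
  proof (rule ccontr)
    assume "c F \<noteq> 0"
    then have "F \<subseteq> S" "card F = j" using cyc by (auto simp: is_cycle_def is_chain_def indep_def)
    then show False using j card_mono[OF assms(1)] by blast
  qed
  then have "is_boundary E S j c"
    unfolding is_boundary_def by (intro exI[of _ "\<lambda>F. 0"]) (simp add: is_chain_def bdry_def)
  with nb show False by simp
qed

lemma ind_hom_nonzero_empty: "ind_hom_nonzero (K :: 'k::field itself) E {} 0"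
proof -
  define c :: "'a set \<Rightarrow> 'k" where "c = (\<lambda>F. if F = {} then 1 else 0)"
  have "is_cycle E {} 0 c" by (auto simp: c_def is_cycle_def is_chain_def indep_def)
  moreover have "\<not> is_boundary E {} 0 c"
  proof
    assume "is_boundary E {} 0 c"
    then obtain d where "\<forall>F. indep E {} F \<and> card F = 0 \<longrightarrow> c F = bdry {} d F"
      by (auto simp: is_boundary_def)
    then have "c {} = bdry {} d {}" by (simp add: indep_def)
    then show False by (simp add: c_def bdry_def)
  qed
  ultimately show ?thesis unfolding ind_hom_nonzero_def by blast
qed

lemma finite_hom_degrees:
  assumes "finite V"
  shows "finite {j. \<exists>S\<subseteq>V. ind_hom_nonzero K E S j}"
proof (rule finite_subset[of _ "{..card V}"])
  show "{j. \<exists>S\<subseteq>V. ind_hom_nonzero K E S j} \<subseteq> {..card V}"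
  proof
    fix j assume "j \<in> {j. \<exists>S\<subseteq>V. ind_hom_nonzero K E S j}"
    then obtain S where S: "S \<subseteq> V" "ind_hom_nonzero K E S j" by blast
    then have "j \<le> card S" using ind_hom_nonzero_le_card finite_subset assms by blast
    then show "j \<in> {..card V}" using card_mono[OF assms S(1)] by simp
  qed
qed simp

lemma reg_attained:
  assumes "finite V"
  obtains S where "S \<subseteq> V" "ind_hom_nonzero K E S (reg K V E)"
proof -
  have "reg K V E \<in> {j. \<exists>S\<subseteq>V. ind_hom_nonzero K E S j}"
    unfolding reg_def
    by (rule Max_in[OF finite_hom_degrees[OF assms]]) (use ind_hom_nonzero_empty in blast)
  then show ?thesis using that by blast
qed

lemma reg_ge:
  assumes "finite V" "S \<subseteq> V" "ind_hom_nonzero K E S j"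
  shows "j \<le> reg K V E"
  unfolding reg_def by (rule Max_ge[OF finite_hom_degrees[OF assms(1)]]) (use assms(2,3) in blast)

lemma ind_hom_nonzero_delete_vertex:
  assumes "x \<notin> S"
  shows "ind_hom_nonzero K (\<lambda>a b. E a b \<and> a \<noteq> x \<and> b \<noteq> x) S j = ind_hom_nonzero K E S j"
proof -
  have "indep (\<lambda>a b. E a b \<and> a \<noteq> x \<and> b \<noteq> x) S = indep E S"
    using assms by (auto simp: indep_def fun_eq_iff)
  then show ?thesis
    unfolding ind_hom_nonzero_def is_cycle_def is_chain_def is_boundary_def by simp
qed

lemma not_prime_graph_if_hom_avoids:
  assumes "finite V" "w \<in> V" "S \<subseteq> V - {w}" "ind_hom_nonzero K E S (reg K V E)"
  shows "\<not> prime_graph K V E"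
proof
  assume prime: "prime_graph K V E"
  let ?E' = "\<lambda>a b. E a b \<and> a \<noteq> w \<and> b \<noteq> w"
  have "w \<notin> S" using assms(3) by blast
  then have "ind_hom_nonzero K ?E' S (reg K V E)"
    using assms(4) by (simp add: ind_hom_nonzero_delete_vertex)
  then have "reg K V E \<le> reg K (V - {w}) ?E'"
    by (rule reg_ge[rotated 2]) (use assms(1,3) in auto)
  moreover have "reg K (V - {w}) ?E' < reg K V E"
    using prime assms(2) by (auto simp: prime_graph_def)
  ultimately show False by simp
qed

lemma graph_simple_edges: "graph V E \<Longrightarrow> simple_edges E"
  unfolding graph_def by unfold_locales auto

lemma prime_graph_link_hom_nonzero:
  fixes K :: "'k::field itself"
  assumes "graph V E" "prime_graph K V E" "x \<in> V"
  shows "0 < reg K V E \<and> ind_hom_nonzero K E (non_nbhd E V x) (reg K V E - 1)"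
proof -
  have fV: "finite V" using assms(1) by (simp add: graph_def)
  obtain S where S: "S \<subseteq> V" "ind_hom_nonzero K E S (reg K V E)" by (rule reg_attained[OF fV])
  have "S = V"
  proof (rule ccontr)
    assume "S \<noteq> V"
    then obtain w where "w \<in> V" "w \<notin> S" using S(1) by blast
    then show False using not_prime_graph_if_hom_avoids[OF fV] S assms(2) by blast
  qed
  then have "ind_hom_nonzero K E (V - {x}) (reg K V E)
        \<or> 0 < reg K V E \<and> ind_hom_nonzero K E (non_nbhd E V x) (reg K V E - 1)"
    using simple_edges.hom_nonzero_delete_or_link[OF graph_simple_edges[OF assms(1)] fV assms(3)] S
    by blast
  then show ?thesis using not_prime_graph_if_hom_avoids[OF fV assms(3)] assms(2) by blast
qed

lemma not_prime_graph_if_open_nbhd_subset: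
  fixes K :: "'k::field itself"
  assumes "graph V E" "x \<in> V" "y \<in> V" "x \<noteq> y" "open_nbhd V E y \<subseteq> open_nbhd V E x"
  shows "\<not> prime_graph K V E"
proof
  assume "prime_graph K V E"
  then have hom: "ind_hom_nonzero K E (non_nbhd E V x) (reg K V E - 1)"
    using prime_graph_link_hom_nonzero[OF assms(1) _ assms(2)] by blast
  interpret simple_edges E by (rule graph_simple_edges[OF assms(1)])
  have "\<not> E x y"
  proof
    assume "E x y"
    then have "x \<in> open_nbhd V E y" using assms(2) edge_sym by (simp add: open_nbhd_def)
    then show False using assms(5) edge_irrefl by (auto simp: open_nbhd_def)
  qed
  then have "y \<in> non_nbhd E V x" using assms(3,4) by simp
  moreover have "\<forall>t\<in>non_nbhd E V x. \<not> E y t" using assms(5) by (auto simp: open_nbhd_def)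
  moreover have "finite (non_nbhd E V x)" using assms(1) by (simp add: graph_def)
  ultimately show False
    using hom cycle_is_boundary_if_isolated unfolding ind_hom_nonzero_def by blast
qed

lemma not_prime_graph_if_closed_nbhd_subset:
  fixes K :: "'k::field itself"
  assumes "graph V E" "u \<in> V" "v \<in> V" "u \<noteq> v" "closed_nbhd V E u \<subseteq> closed_nbhd V E v"
    and "2 \<le> degree V E v"
  shows "\<not> prime_graph K V E"
proof
  assume prime: "prime_graph K V E"
  interpret simple_edges E by (rule graph_simple_edges[OF assms(1)])
  have fV: "finite V" and edges_in: "\<And>a b. E a b \<Longrightarrow> b \<in> V" using assms(1) by (auto simp: graph_def)
  have Evu: "E v u" using assms(2,4,5) by (auto simp: closed_nbhd_def open_nbhd_def)
  have "\<not> open_nbhd V E v \<subseteq> {u}"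
    using card_mono[of "{u}" "open_nbhd V E v"] assms(6) by (auto simp: degree_def)
  then obtain w where Evw: "E v w" and "w \<in> V" "w \<noteq> u" by (auto simp: open_nbhd_def)
  have u_isolated: "\<forall>t\<in>non_nbhd E V v. \<not> E u t"
    using assms(5) edges_in by (auto simp: closed_nbhd_def open_nbhd_def)
  have "0 < reg K V E" and "ind_hom_nonzero K E (non_nbhd E V v) (reg K V E - 1)"
    using prime_graph_link_hom_nonzero[OF assms(1) prime assms(3)] by auto
  then have "ind_hom_nonzero K E (insert u (insert v (non_nbhd E V v))) (reg K V E)"
    using hom_nonzero_suspension[OF _ _ _ Evu u_isolated] fV Evu by fastforce
  moreover have "insert u (insert v (non_nbhd E V v)) \<subseteq> V - {w}"
    using assms(2,3) \<open>w \<noteq> u\<close> Evw edge_irrefl by auto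
  ultimately show False
    using not_prime_graph_if_hom_avoids[OF fV \<open>w \<in> V\<close>] prime by blast
qed

theorem mainTheorem4:
  fixes V :: "'a::linorder set" and E :: "'a \<Rightarrow> 'a \<Rightarrow> bool" and K :: "'k::field itself"
  assumes "graph V E"
  shows "(\<forall>x\<in>V. \<forall>y\<in>V. x \<noteq> y \<and> open_nbhd V E y \<subseteq> open_nbhd V E x
            \<longrightarrow> \<not> prime_graph K V E)
       \<and> (\<forall>u\<in>V. \<forall>v\<in>V. u \<noteq> v \<and> closed_nbhd V E u \<subseteq> closed_nbhd V E v \<and> degree V E v \<ge> 2
            \<longrightarrow> \<not> prime_graph K V E)"
  using not_prime_graph_if_open_nbhd_subset[OF assms] not_prime_graph_if_closed_nbhd_subset[OF assms]
  by blast

end
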